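(* Let $\varphi:[0,1)\to(0,\infty)$ be continuous and regularly varying at $1$ with index $\rho>0$, and let $\kappa(t):=1$, $t\in[0,1)$. Let $c_0:=0<c_1<c_2<\dots<1$ be such that $\|\mathbb 1_{(c_n,1)}\kappa\|^2=2^{-n}\|\kappa\|^2$, set $J_n=(c_{n-1},c_n)$ and $\omega_n=\|\mathbb 1_{J_n}\kappa\|\cdot\|\mathbb 1_{J_n}\varphi\|$ (norms in $L^2(0,1)$). Then \[ \omega_n\asymp 2^{-n}\varphi(1-2^{-n}), \] i.e. there exist $C_1,C_2>0$ with $C_1\,2^{-n}\varphi(1-2^{-n})\le\omega_n\le C_2\,2^{-n}\varphi(1-2^{-n})$ for all $n\in\mathbb N$.
   Context: A measurable function $\psi:[1,\infty)\to(0,\infty)$ is regularly varying with index $\rho_\psi\in\mathbb R$ if $\lim_{x\to\infty}\psi(kx)/\psi(x)=k^{\rho_\psi}$ for every $k>0$. A function $\varphi:[0,1)\to(0,\infty)$ is regularly varying at $1$ with index $\rho$ if $\psi(x):=\varphi\big(\frac{x-1}{x}\big)$, $x\in[1,\infty)$, is regularly varying with index $\rho$. *)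

theory Defs
  imports "HOL-Analysis.Analysis"
begin

definition L2norm01 :: "(real \<Rightarrow> real) \<Rightarrow> real" where
  "L2norm01 f = sqrt (LINT x:{0<..<1}|lborel. (f x)\<^sup>2)"

definition regularly_varying :: "(real \<Rightarrow> real) \<Rightarrow> real \<Rightarrow> bool" where
  "regularly_varying \<psi> \<rho> \<longleftrightarrow>
     set_borel_measurable lborel {1..} \<psi> \<and>
     (\<forall>x\<in>{1..}. \<psi> x > 0) \<and>
     (\<forall>k>0. ((\<lambda>x. \<psi> (k * x) / \<psi> x) \<longlongrightarrow> k powr \<rho>) at_top)"

definition regularly_varying_at_1 :: "(real \<Rightarrow> real) \<Rightarrow> real \<Rightarrow> bool" where
  "regularly_varying_at_1 \<phi> \<rho> \<longleftrightarrow> regularly_varying (\<lambda>x. \<phi> ((x - 1) / x)) \<rho>"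

end

theory Submission
  imports Defs
begin

(* The normalisation of the c n forces c n = 1 - 2^-n, so J n has length d = 2^-n and the
   first factor of omega n is sqrt d.  It therefore suffices that phi is comparable to phi (1 - d)
   on [1 - 2d, 1 - d], uniformly in d in (0, 1/2].  For psi x = phi (1 - 1/x) this says that
   ln psi (w x) - ln psi x is bounded for w in [1/2, 1] and large x, the boundedness half of the
   uniform convergence theorem for regularly varying functions.  As psi is continuous, the
   pointwise bounds for k in [1, 2] become uniform for k in some [p, q] by the Baire category
   theorem, and writing w as a product of factors from [p/q, 1] extends them to w in [1/2, 1].
   On the compact rest of [0, 1) continuity bounds phi above and below.  The sign of rho is
   irrelevant: only the existence of the limits is used. *)

lemma L2norm01_indicator:
  assumes "0 \<le> a" "b \<le> 1"
  shows "L2norm01 (\<lambda>t. indicator {a<..<b} t * f t) = sqrt (LINT t:{a<..<b}|lborel. (f t)\<^sup>2)"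
proof -
  have "indicator {0<..<1} t *\<^sub>R (indicator {a<..<b} t * f t)\<^sup>2
          = indicator {a<..<b} t *\<^sub>R (f t)\<^sup>2" for t :: real
    using assms by (auto simp: indicator_def)
  then show ?thesis
    by (simp add: L2norm01_def set_lebesgue_integral_def)
qed

lemma set_integral_Ioo_const:
  fixes a b c :: real
  assumes "a \<le> b"
  shows "(LINT t:{a<..<b}|lborel. c) = (b - a) * c"
  using assms by (simp add: set_integral_const)

lemma L2norm01_indicator_one:
  assumes "0 \<le> a" "a \<le> b" "b \<le> 1"
  shows "L2norm01 (\<lambda>t. indicator {a<..<b} t * 1) = sqrt (b - a)"
proof -
  have "L2norm01 (\<lambda>t. indicator {a<..<b} t * 1) = sqrt (LINT t:{a<..<b}|lborel. 1\<^sup>2)"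
    using L2norm01_indicator[OF assms(1,3), of "\<lambda>_. 1"] .
  also have "\<dots> = sqrt (b - a)"
    using set_integral_Ioo_const[OF assms(2), of 1] by simp
  finally show ?thesis .
qed

lemma L2norm01_one: "L2norm01 (\<lambda>t. 1) = 1"
proof -
  have "(LINT t:{0<..<1::real}|lborel. (1::real)\<^sup>2) = 1"
    using set_integral_Ioo_const[of 0 1 1] by simp
  then show ?thesis
    unfolding L2norm01_def by simp
qed

lemma L2norm01_indicator_bounds:
  fixes f :: "real \<Rightarrow> real"
  assumes ab: "0 \<le> a" "a \<le> b" "b \<le> 1"
    and cont: "continuous_on {a..b} f"
    and bounds: "\<And>t. t \<in> {a..b} \<Longrightarrow> lo \<le> f t \<and> f t \<le> hi"
    and lo: "0 \<le> lo"
  shows "lo * sqrt (b - a) \<le> L2norm01 (\<lambda>t. indicator {a<..<b} t * f t)"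
    and "L2norm01 (\<lambda>t. indicator {a<..<b} t * f t) \<le> hi * sqrt (b - a)"
proof -
  define I where "I = (LINT t:{a<..<b}|lborel. (f t)\<^sup>2)"
  have "set_integrable lborel {a..b} (\<lambda>t. (f t)\<^sup>2)"
    using cont by (intro borel_integrable_atLeastAtMost' continuous_intros)
  then have int: "set_integrable lborel {a<..<b} (\<lambda>t. (f t)\<^sup>2)"
    by (rule set_integrable_subset) auto
  have const_int: "set_integrable lborel {a<..<b} (\<lambda>t. c)" for c :: real
    by (intro set_integrable_subset[OF borel_integrable_atLeastAtMost', of a b]) auto
  have sq_bounds: "lo\<^sup>2 \<le> (f t)\<^sup>2 \<and> (f t)\<^sup>2 \<le> hi\<^sup>2" if "t \<in> {a<..<b}" for t
    using bounds[of t] that lo by (auto intro: power_mono)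
  have "(b - a) * lo\<^sup>2 \<le> I"
    unfolding I_def set_integral_Ioo_const[OF ab(2), symmetric]
    using sq_bounds by (intro set_integral_mono const_int int) auto
  moreover have "I \<le> (b - a) * hi\<^sup>2"
    unfolding I_def set_integral_Ioo_const[OF ab(2), symmetric]
    using sq_bounds by (intro set_integral_mono const_int int) auto
  moreover have "0 \<le> hi"
    using bounds[of a] ab lo by auto
  ultimately have "sqrt ((b - a) * lo\<^sup>2) \<le> sqrt I" "sqrt I \<le> sqrt ((b - a) * hi\<^sup>2)"
    by simp_all
  moreover have "sqrt ((b - a) * lo\<^sup>2) = lo * sqrt (b - a)"
    "sqrt ((b - a) * hi\<^sup>2) = hi * sqrt (b - a)"
    using lo \<open>0 \<le> hi\<close> by (simp_all add: real_sqrt_mult)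
  moreover have "L2norm01 (\<lambda>t. indicator {a<..<b} t * f t) = sqrt I"
    using ab by (simp add: L2norm01_indicator I_def)
  ultimately show "lo * sqrt (b - a) \<le> L2norm01 (\<lambda>t. indicator {a<..<b} t * f t)"
    and "L2norm01 (\<lambda>t. indicator {a<..<b} t * f t) \<le> hi * sqrt (b - a)"
    by simp_all
qed

lemma L2norm01_indicator_product_bounds:
  fixes f :: "real \<Rightarrow> real"
  assumes ab: "0 \<le> a" "a \<le> b" "b \<le> 1"
    and cont: "continuous_on {a..b} f"
    and bounds: "\<And>t. t \<in> {a..b} \<Longrightarrow> lo \<le> f t \<and> f t \<le> hi"
    and lo: "0 \<le> lo"
  shows "lo * (b - a) \<le> L2norm01 (\<lambda>t. indicator {a<..<b} t * 1)
                          * L2norm01 (\<lambda>t. indicator {a<..<b} t * f t)"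
    and "L2norm01 (\<lambda>t. indicator {a<..<b} t * 1)
           * L2norm01 (\<lambda>t. indicator {a<..<b} t * f t) \<le> hi * (b - a)"
proof -
  let ?N = "L2norm01 (\<lambda>t. indicator {a<..<b} t * f t)"
  have s: "0 \<le> sqrt (b - a)" "sqrt (b - a) * sqrt (b - a) = b - a"
    using ab by simp_all
  have "lo * (b - a) = sqrt (b - a) * (lo * sqrt (b - a))"
    using s(2) by (simp add: algebra_simps)
  also have "\<dots> \<le> sqrt (b - a) * ?N"
    using L2norm01_indicator_bounds(1)[OF assms] s(1) by (rule mult_left_mono)
  finally show "lo * (b - a) \<le> L2norm01 (\<lambda>t. indicator {a<..<b} t * 1) * ?N"
    using L2norm01_indicator_one[OF ab] by simp
  have "sqrt (b - a) * ?N \<le> sqrt (b - a) * (hi * sqrt (b - a))"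
    using L2norm01_indicator_bounds(2)[OF assms] s(1) by (rule mult_left_mono)
  also have "\<dots> = hi * (b - a)"
    using s(2) by (simp add: algebra_simps)
  finally show "L2norm01 (\<lambda>t. indicator {a<..<b} t * 1) * ?N \<le> hi * (b - a)"
    using L2norm01_indicator_one[OF ab] by simp
qed

lemma L2norm01_tail_eq_dyadic:
  assumes "0 \<le> a" "a \<le> 1"
    and "(L2norm01 (\<lambda>t. indicator {a<..<1} t * 1))\<^sup>2
           = 2 powr (- real n) * (L2norm01 (\<lambda>t. 1))\<^sup>2"
  shows "a = 1 - 2 powr (- real n)"
proof -
  have "L2norm01 (\<lambda>t. indicator {a<..<1} t * 1) = sqrt (1 - a)"
    using assms(1,2) by (rule L2norm01_indicator_one) simp
  with assms(2,3) show ?thesis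
    by (simp add: L2norm01_one)
qed

lemma dyadic_step:
  fixes n :: nat
  assumes "1 \<le> n"
  shows "2 powr (- real (n - 1)) = 2 * 2 powr (- real n)" and "2 powr (- real n) \<le> (1/2 :: real)"
proof -
  show "2 powr (- real (n - 1)) = 2 * 2 powr (- real n)"
    using assms powr_add[of 2 1 "- real n"] by simp
  have "2 powr (- real n) \<le> (2 :: real) powr (- 1)"
    using assms by (intro powr_mono) auto
  then show "2 powr (- real n) \<le> (1/2 :: real)"
    by simp
qed

lemma eventually_at_top_scaled:
  fixes s :: real
  assumes "0 < s" "eventually P at_top"
  shows "eventually (\<lambda>x. P (s * x)) at_top"
proof -
  have "filterlim (\<lambda>x. s * x) at_top at_top"
    using assms(1) by (intro filterlim_cmult_at_bot_at_top[OF filterlim_ident]) auto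
  then show ?thesis
    using assms(2) by (simp add: filterlim_iff)
qed

lemma uniform_increment_bound_on_subinterval:
  fixes g :: "real \<Rightarrow> real"
  assumes cont: "continuous_on {1..} g"
    and bound: "\<And>k. k \<in> {1..2} \<Longrightarrow> eventually (\<lambda>x. \<bar>g (k * x) - g x\<bar> \<le> B) at_top"
  obtains p q where "1 \<le> p" "p < q" "q \<le> 2"
    and "eventually (\<lambda>x. \<forall>k\<in>{p..q}. \<bar>g (k * x) - g x\<bar> \<le> B) at_top"
proof -
  define S :: "real set" where "S = {1..2}"
  define F where
    "F N = (\<Inter>x\<in>{max 1 (real N)..}. {k\<in>S. \<bar>g (k * x) - g x\<bar> \<le> B})" for N :: nat
  have F_iff:
    "k \<in> F N \<longleftrightarrow> k \<in> S \<and> (\<forall>x\<ge>max 1 (real N). \<bar>g (k * x) - g x\<bar> \<le> B)" for k N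
    unfolding F_def by auto
  have closed_F: "closed (F N)" for N
    unfolding F_def
  proof (intro closed_INT ballI)
    fix x assume "x \<in> {max 1 (real N)..}"
    then have "(\<lambda>k. k * x) ` S \<subseteq> {1..}"
      by (auto simp: S_def intro: order.trans[OF _ mult_mono, of 1 "1 * 1"])
    then have "continuous_on S (\<lambda>k. g (k * x))"
      by (intro continuous_on_compose2[OF cont] continuous_intros) auto
    then show "closed {k \<in> S. \<bar>g (k * x) - g x\<bar> \<le> B}"
      by (intro continuous_on_closed_Collect_le continuous_intros) (auto simp: S_def)
  qed
  have covered: "\<exists>N. k \<in> F N" if k: "k \<in> S" for k
  proof -
    obtain x0 where "\<forall>x\<ge>x0. \<bar>g (k * x) - g x\<bar> \<le> B"
      using bound[of k] k by (auto simp: S_def eventually_at_top_linorder)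
    moreover obtain N :: nat where "x0 \<le> real N"
      using real_arch_simple by blast
    ultimately have "k \<in> F N"
      using k by (auto simp: F_iff)
    then show ?thesis ..
  qed
  have "\<exists>N. \<not> S \<subseteq> closure (S - F N)"
  proof (rule ccontr)
    assume "\<not> ?thesis"
    then have "S \<subseteq> closure (\<Inter>N. S - F N)"
      using closed_F F_iff
      by (intro Baire) (auto simp: S_def intro!: closed_subset)
    moreover have "(\<Inter>N. S - F N) = {}"
      using covered by blast
    ultimately have "S = {}"
      by (metis closure_empty subset_empty)
    then show False
      by (simp add: S_def)
  qed
  then obtain N k0 e where k0: "k0 \<in> S" and "e > 0"
    and e: "\<And>k. k \<in> S - F N \<Longrightarrow> \<not> dist k k0 < e"
    unfolding closure_approachable subset_iff by metis
  define p where "p = max 1 (k0 - e/2)"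
  define q where "q = min 2 (k0 + e/2)"
  have "k \<in> F N" if "k \<in> {p..q}" for k
  proof (rule ccontr)
    assume "k \<notin> F N"
    moreover have "k \<in> S" "\<bar>k - k0\<bar> < e"
      using that \<open>e > 0\<close> by (auto simp: S_def p_def q_def)
    ultimately show False
      using e[of k] by (simp add: dist_real_def)
  qed
  then have "eventually (\<lambda>x. \<forall>k\<in>{p..q}. \<bar>g (k * x) - g x\<bar> \<le> B) at_top"
    by (intro eventually_at_top_linorderI[of "max 1 (real N)"]) (auto simp: F_iff)
  moreover have "1 \<le> p" "p < q" "q \<le> 2"
    using k0 \<open>e > 0\<close> by (auto simp: S_def p_def q_def)
  ultimately show ?thesis
    using that by blast
qed

lemma increment_bound_compose:
  fixes g :: "real \<Rightarrow> real"
  assumes s: "0 < s" "s \<le> 1" and L1: "0 \<le> L1"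
    and r_bound: "eventually (\<lambda>x. \<forall>w\<in>{r..1}. \<bar>g (w * x) - g x\<bar> \<le> L1) at_top"
    and s_bound: "eventually (\<lambda>x. \<forall>w\<in>{s..1}. \<bar>g (w * x) - g x\<bar> \<le> L2) at_top"
  shows "eventually (\<lambda>x. \<forall>w\<in>{r * s..1}. \<bar>g (w * x) - g x\<bar> \<le> L1 + L2) at_top"
  using eventually_at_top_scaled[OF s(1) r_bound] s_bound
proof eventually_elim
  case (elim x)
  show ?case
  proof
    fix w assume w: "w \<in> {r * s..1}"
    show "\<bar>g (w * x) - g x\<bar> \<le> L1 + L2"
    proof (cases "s \<le> w")
      case True
      then have "\<bar>g (w * x) - g x\<bar> \<le> L2"
        using elim(2) w by auto
      then show ?thesis
        using L1 by linarith
    next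
      case False
      then have "w / s \<in> {r..1}"
        using w s by (auto simp: field_simps)
      from bspec[OF elim(1) this] have "\<bar>g (w * x) - g (s * x)\<bar> \<le> L1"
        using s by simp
      moreover have "\<bar>g (s * x) - g x\<bar> \<le> L2"
        using elim(2) s by auto
      ultimately show ?thesis
        by linarith
    qed
  qed
qed

lemma increment_bound_power:
  fixes g :: "real \<Rightarrow> real"
  assumes r: "0 < r" "r \<le> 1"
    and bound: "eventually (\<lambda>x. \<forall>w\<in>{r..1}. \<bar>g (w * x) - g x\<bar> \<le> L) at_top"
  shows "eventually (\<lambda>x. \<forall>w\<in>{r ^ m..1}. \<bar>g (w * x) - g x\<bar> \<le> real m * L) at_top"
proof (induction m)
  case 0
  show ?case
    by simp
next
  case (Suc m)
  have "0 \<le> L"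
    using eventually_happens'[OF trivial_limit_at_top_linorder bound] r by fastforce
  then show ?case
    using increment_bound_compose[OF r _ Suc bound] by (simp add: algebra_simps)
qed

lemma uniform_increment_bound:
  fixes g :: "real \<Rightarrow> real"
  assumes cont: "continuous_on {1..} g"
    and bound: "\<And>k. k \<in> {1..2} \<Longrightarrow> eventually (\<lambda>x. \<bar>g (k * x) - g x\<bar> \<le> B) at_top"
    and a: "0 < a"
  obtains L where "eventually (\<lambda>x. \<forall>w\<in>{a..1}. \<bar>g (w * x) - g x\<bar> \<le> L) at_top"
proof -
  obtain p q where pq: "1 \<le> p" "p < q" "q \<le> 2"
    and pq_bound: "eventually (\<lambda>x. \<forall>k\<in>{p..q}. \<bar>g (k * x) - g x\<bar> \<le> B) at_top"
    using uniform_increment_bound_on_subinterval[OF cont bound] by blast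
  define r where "r = p / q"
  have r: "0 < r" "r < 1"
    using pq by (auto simp: r_def)
  \<comment> \<open>Compare both g (w x) and g x with g (x / q), since w q and q lie in [p, q].\<close>
  have "eventually (\<lambda>x. \<forall>k\<in>{p..q}. \<bar>g (k * (x / q)) - g (x / q)\<bar> \<le> B) at_top"
    using eventually_at_top_scaled[OF _ pq_bound, of "1 / q"] pq by simp
  then have r_bound: "eventually (\<lambda>x. \<forall>w\<in>{r..1}. \<bar>g (w * x) - g x\<bar> \<le> 2 * B) at_top"
  proof (rule eventually_mono, intro ballI)
    fix x w
    assume x: "\<forall>k\<in>{p..q}. \<bar>g (k * (x / q)) - g (x / q)\<bar> \<le> B" and w: "w \<in> {r..1}"
    have "w * q \<in> {p..q}"
      using w pq by (auto simp: r_def field_simps)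
    from bspec[OF x this] have "\<bar>g (w * x) - g (x / q)\<bar> \<le> B"
      using pq by simp
    moreover from bspec[OF x, of q] have "\<bar>g x - g (x / q)\<bar> \<le> B"
      using pq by simp
    ultimately show "\<bar>g (w * x) - g x\<bar> \<le> 2 * B"
      by linarith
  qed
  obtain m where "r ^ m < a"
    using real_arch_pow_inv[OF a r(2)] by blast
  then have "eventually (\<lambda>x. \<forall>w\<in>{a..1}. \<bar>g (w * x) - g x\<bar> \<le> real m * (2 * B)) at_top"
    using increment_bound_power[OF r(1) _ r_bound, of m] r by (auto elim!: eventually_mono)
  then show ?thesis
    using that by blast
qed

lemma regularly_varying_ln_increment_bound:
  fixes \<psi> :: "real \<Rightarrow> real"
  assumes rv: "regularly_varying \<psi> \<rho>" and cont: "continuous_on {1..} \<psi>" and a: "0 < a"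
  obtains L where "eventually (\<lambda>x. \<forall>w\<in>{a..1}. \<bar>ln (\<psi> (w * x)) - ln (\<psi> x)\<bar> \<le> L) at_top"
proof -
  have pos: "\<psi> x > 0" if "x \<ge> 1" for x
    using rv that by (auto simp: regularly_varying_def)
  have ln_cont: "continuous_on {1..} (\<lambda>x. ln (\<psi> x))"
    using pos by (intro continuous_on_ln cont) force
  have "eventually (\<lambda>x. \<bar>ln (\<psi> (k * x)) - ln (\<psi> x)\<bar> \<le> 1 + \<bar>\<rho>\<bar> * ln 2) at_top"
    if k: "k \<in> {1..2}" for k
  proof -
    have "((\<lambda>x. ln (\<psi> (k * x) / \<psi> x)) \<longlongrightarrow> ln (k powr \<rho>)) at_top"
      using rv k by (intro tendsto_ln) (auto simp: regularly_varying_def)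
    moreover have "eventually (\<lambda>x. ln (\<psi> (k * x) / \<psi> x) = ln (\<psi> (k * x)) - ln (\<psi> x)) at_top"
      using eventually_ge_at_top[of 1]
    proof eventually_elim
      case (elim x)
      then have "1 \<le> k * x"
        using k mult_mono[of 1 k 1 x] by simp
      then show ?case
        using elim pos[of x] pos[of "k * x"] by (simp add: ln_div)
    qed
    ultimately have "((\<lambda>x. ln (\<psi> (k * x)) - ln (\<psi> x)) \<longlongrightarrow> \<rho> * ln k) at_top"
      using k by (simp add: Lim_transform_eventually)
    then have "eventually (\<lambda>x. \<bar>(ln (\<psi> (k * x)) - ln (\<psi> x)) - \<rho> * ln k\<bar> < 1) at_top"
      by (auto dest: tendstoD[of _ _ _ 1] simp: dist_real_def)
    moreover have "\<bar>\<rho> * ln k\<bar> \<le> \<bar>\<rho>\<bar> * ln 2"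
      using k by (auto simp: abs_mult intro!: mult_left_mono)
    ultimately show ?thesis
      by (auto elim!: eventually_mono)
  qed
  then show ?thesis
    using uniform_increment_bound[OF ln_cont _ a] that by blast
qed

lemma regularly_varying_at_1_ln_oscillation_bound:
  fixes \<phi> :: "real \<Rightarrow> real"
  assumes pos: "\<And>t. t \<in> {0..<1} \<Longrightarrow> \<phi> t > 0"
    and cont: "continuous_on {0..<1} \<phi>"
    and rv: "regularly_varying_at_1 \<phi> \<rho>"
  obtains L where "\<And>d t. 0 < d \<Longrightarrow> d \<le> 1/2 \<Longrightarrow> t \<in> {1 - 2 * d..1 - d} \<Longrightarrow>
                     \<bar>ln (\<phi> t) - ln (\<phi> (1 - d))\<bar> \<le> L"
proof -
  define \<psi> where "\<psi> x = \<phi> ((x - 1) / x)" for x :: real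
  have "continuous_on {1..} \<psi>"
    unfolding \<psi>_def
    by (intro continuous_on_compose2[OF cont] continuous_intros) (auto simp: field_simps)
  then obtain L1 where "eventually (\<lambda>x. \<forall>w\<in>{1/2..1}. \<bar>ln (\<psi> (w * x)) - ln (\<psi> x)\<bar> \<le> L1) at_top"
    using regularly_varying_ln_increment_bound[of \<psi> \<rho> "1/2"] rv
    unfolding regularly_varying_at_1_def \<psi>_def by auto
  then obtain X where X: "X \<ge> 1"
    and L1: "\<And>x w. x \<ge> X \<Longrightarrow> w \<in> {1/2..1} \<Longrightarrow> \<bar>ln (\<psi> (w * x)) - ln (\<psi> x)\<bar> \<le> L1"
    unfolding eventually_at_top_linorder by (metis max.cobounded1 max.cobounded2 order.trans)
  define K where "K = {0..1 - 1/X}"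
  have "0 < 1 / X"
    using X by simp
  then have K: "K \<subseteq> {0..<1}"
    by (auto simp: K_def simp del: zero_less_divide_1_iff)
  have "compact ((\<lambda>t. ln (\<phi> t)) ` K)"
    using K pos unfolding K_def
    by (intro compact_continuous_image continuous_on_ln continuous_on_subset[OF cont]) force+
  then obtain M where M: "\<And>t. t \<in> K \<Longrightarrow> \<bar>ln (\<phi> t)\<bar> \<le> M"
    by (metis compact_imp_bounded bounded_real imageI)
  have reparam: "\<psi> (1 / (1 - s)) = \<phi> s" if "s < 1" for s
  proof -
    have "(1 / (1 - s) - 1) / (1 / (1 - s)) = s"
      using that by (simp add: field_simps)
    then show ?thesis
      by (simp add: \<psi>_def)
  qed
  have "\<bar>ln (\<phi> t) - ln (\<phi> (1 - d))\<bar> \<le> max L1 (2 * M)"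
    if d: "0 < d" "d \<le> 1/2" and t: "t \<in> {1 - 2 * d..1 - d}" for d t
  proof (cases "X \<le> 1 / d")
    case True
    define w where "w = d / (1 - t)"
    have "w \<in> {1/2..1}"
      using d t by (auto simp: w_def field_simps)
    then have "\<bar>ln (\<psi> (w * (1 / d))) - ln (\<psi> (1 / d))\<bar> \<le> L1"
      using L1 True by blast
    moreover have "\<psi> (w * (1 / d)) = \<phi> t" "\<psi> (1 / d) = \<phi> (1 - d)"
      using reparam[of t] reparam[of "1 - d"] d t by (auto simp: w_def)
    ultimately show ?thesis
      by simp
  next
    case False
    then have "1 - d \<le> 1 - 1 / X"
      using d X by (auto simp: field_simps)
    then have "t \<in> K" "1 - d \<in> K"
      using d t by (auto simp: K_def)
    then have "\<bar>ln (\<phi> t)\<bar> \<le> M" "\<bar>ln (\<phi> (1 - d))\<bar> \<le> M"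
      using M by auto
    then show ?thesis
      by linarith
  qed
  then show ?thesis
    using that by blast
qed

lemma regularly_varying_at_1_comparable:
  fixes \<phi> :: "real \<Rightarrow> real"
  assumes pos: "\<And>t. t \<in> {0..<1} \<Longrightarrow> \<phi> t > 0"
    and cont: "continuous_on {0..<1} \<phi>"
    and rv: "regularly_varying_at_1 \<phi> \<rho>"
  obtains A B where "0 < A" "0 < B"
    and "\<And>d t. 0 < d \<Longrightarrow> d \<le> 1/2 \<Longrightarrow> t \<in> {1 - 2 * d..1 - d} \<Longrightarrow>
                 A * \<phi> (1 - d) \<le> \<phi> t \<and> \<phi> t \<le> B * \<phi> (1 - d)"
proof -
  obtain L where L: "\<And>d t. 0 < d \<Longrightarrow> d \<le> 1/2 \<Longrightarrow> t \<in> {1 - 2 * d..1 - d} \<Longrightarrow>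
                       \<bar>ln (\<phi> t) - ln (\<phi> (1 - d))\<bar> \<le> L"
    using regularly_varying_at_1_ln_oscillation_bound[OF pos cont rv] by blast
  have "exp (- L) * \<phi> (1 - d) \<le> \<phi> t \<and> \<phi> t \<le> exp L * \<phi> (1 - d)"
    if d: "0 < d" "d \<le> 1/2" and t: "t \<in> {1 - 2 * d..1 - d}" for d t
  proof -
    have "\<phi> t > 0" "\<phi> (1 - d) > 0"
      using pos d t by auto
    then have "\<phi> t = exp (ln (\<phi> t) - ln (\<phi> (1 - d))) * \<phi> (1 - d)"
      by (simp add: exp_diff)
    moreover have "exp (- L) \<le> exp (ln (\<phi> t) - ln (\<phi> (1 - d)))"
      "exp (ln (\<phi> t) - ln (\<phi> (1 - d))) \<le> exp L"
      using L[OF d t] by auto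
    ultimately show ?thesis
      using \<open>\<phi> (1 - d) > 0\<close> by (metis mult_right_mono less_imp_le)
  qed
  then show ?thesis
    using that[of "exp (- L)" "exp L"] by simp
qed

theorem lemma5p9:
  fixes \<phi> :: "real \<Rightarrow> real" and \<rho> :: real and c :: "nat \<Rightarrow> real"
  assumes phi_pos: "\<forall>t\<in>{0..<1}. \<phi> t > 0"
    and phi_cont: "continuous_on {0..<1} \<phi>"
    and phi_rv: "regularly_varying_at_1 \<phi> \<rho>"
    and rho_pos: "\<rho> > 0"
    and c0: "c 0 = 0"
    and c_mono: "strict_mono c"
    and c_lt1: "\<forall>n. c n < 1"
    and c_norm: "\<forall>n. (L2norm01 (\<lambda>t. indicator {c n<..<1} t * 1))\<^sup>2
                     = 2 powr (- real n) * (L2norm01 (\<lambda>t. 1))\<^sup>2"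
  shows "\<exists>C1 C2. C1 > 0 \<and> C2 > 0 \<and>
           (\<forall>n\<ge>1.
              C1 * 2 powr (- real n) * \<phi> (1 - 2 powr (- real n))
                \<le> L2norm01 (\<lambda>t. indicator {c (n-1)<..<c n} t * 1)
                   * L2norm01 (\<lambda>t. indicator {c (n-1)<..<c n} t * \<phi> t) \<and>
              L2norm01 (\<lambda>t. indicator {c (n-1)<..<c n} t * 1)
                   * L2norm01 (\<lambda>t. indicator {c (n-1)<..<c n} t * \<phi> t)
                \<le> C2 * 2 powr (- real n) * \<phi> (1 - 2 powr (- real n)))"
proof -
  have c: "c n = 1 - 2 powr (- real n)" for n
    using c0 strict_mono_less_eq[OF c_mono, of 0 n] c_lt1 c_norm
    by (intro L2norm01_tail_eq_dyadic) (auto simp: less_imp_le)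
  obtain A B where AB: "0 < A" "0 < B"
    and comparable: "\<And>d t. 0 < d \<Longrightarrow> d \<le> 1/2 \<Longrightarrow> t \<in> {1 - 2 * d..1 - d} \<Longrightarrow>
                               A * \<phi> (1 - d) \<le> \<phi> t \<and> \<phi> t \<le> B * \<phi> (1 - d)"
    using regularly_varying_at_1_comparable[OF _ phi_cont phi_rv] phi_pos by blast
  have "A * d * \<phi> (1 - d) \<le> L2norm01 (\<lambda>t. indicator {c (n-1)<..<c n} t * 1)
                                * L2norm01 (\<lambda>t. indicator {c (n-1)<..<c n} t * \<phi> t) \<and>
        L2norm01 (\<lambda>t. indicator {c (n-1)<..<c n} t * 1)
          * L2norm01 (\<lambda>t. indicator {c (n-1)<..<c n} t * \<phi> t) \<le> B * d * \<phi> (1 - d)"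
    if "n \<ge> 1" and d: "d = 2 powr (- real n)" for n d
  proof -
    have J: "c (n - 1) = 1 - 2 * d" "c n = 1 - d" "0 < d" "d \<le> 1/2"
      using dyadic_step[OF \<open>n \<ge> 1\<close>] by (simp_all add: c d)
    then have "continuous_on {1 - 2 * d..1 - d} \<phi>" "0 \<le> A * \<phi> (1 - d)"
      using AB phi_pos by (auto intro: continuous_on_subset[OF phi_cont] simp: less_imp_le)
    then show ?thesis
      using comparable[OF J(3,4)] J
        L2norm01_indicator_product_bounds[of "1 - 2 * d" "1 - d" \<phi> "A * \<phi> (1 - d)" "B * \<phi> (1 - d)"]
      by (simp add: ac_simps)
  qed
  then show ?thesis
    using AB by blast
qed

end
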